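(* Let $S\subseteq\{0,1\}^\ell$ be a finite set of vectors such that for all $a,b,c,d\in S$ (not necessarily distinct) there is an index $h\in[\ell]$ with $a[h]=b[h]=c[h]=d[h]=1$ (i.e., $S$ has no orthogonal quadruple). Then the weighted directed graph $G=\rho(S)$ defined below satisfies $\mathrm{diam}(G)\le 4$.
   Context: $[\ell]=\{1,\dots,\ell\}$; for $x\in\{0,1\}^\ell$, $x[i]$ is its $i$-th coordinate. A "double-arc" (edge) of weight $w$ between $x$ and $y$ means both arcs $x\to y$ and $y\to x$ of weight $w$. Distances $d_G(x,y)$ are shortest directed path lengths; $\mathrm{diam}(G)=\max_{x,y} d_G(x,y)$ over ordered pairs. Construction of $G=\rho(S)$. Vertex set: two special vertices $u,v$ and six disjoint sets (index triples $(i,j,k)\in[\ell]^3$ are ordered and may have repeated entries): - ABC $=\{(a,b,c)_{ABC}: a,b,c\in S\}$; DCB $=\{(d,c,b)_{DCB}: d,c,b\in S\}$. - AB $=\{(a,b,i,j,k)_{AB}: a,b\in S,\ a[i]=a[j]=a[k]=1,$ and $b$ equals 1 on at least two of the positions $i,j,k\}$; DC $=\{(d,c,i,j,k)_{DC}: d,c\in S,\ d[i]=d[j]=d[k]=1,$ and $c$ equals 1 on at least two of the positions $i,j,k\}$. - $AD_Y=\{(a,d,i,j,k)_Y: a,d\in S,\ a[i]=a[j]=a[k]=d[i]=d[j]=d[k]=1\}$; $AD_X=\{(a,d,i,j,k)_X: a,d\in S,$ at most one of $a[i],a[j],a[k],d[i],d[j],d[k]$ equals $0\}$. Arcs incident to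 $u,v$ (an arc to/from a set means to/from every vertex of that set): arcs $u\to$ABC of weight 0 and ABC$\to u$ of weight 4; $v\to$DCB of weight 4 and DCB$\to v$ of weight 0; $u\to$AB of weight 0 and AB$\to u$ of weight 3; DC$\to v$ of weight 0 and $v\to$DC of weight 3; double-arcs $u$–$v$ of weight 2, $u$–$AD_X$ and $v$–$AD_X$ of weight 1, $u$–$AD_Y$ and $v$–$AD_Y$ of weight 2, AB–$v$ of weight 2, DC–$u$ of weight 2. All other arcs are double-arcs of weight 1, present exactly in the following cases (only when both endpoints exist): - $(a,b,c)_{ABC}$–$(a,b,i,j,k)_{AB}$ if some $h\in\{i,j,k\}$ has $b[h]=c[h]=1$; - $(d,c,b)_{DCB}$–$(d,c,i,j,k)_{DC}$ if some $h\in\{i,j,k\}$ has $c[h]=b[h]=1$; - $(a,b,i,j,k)_{AB}$–$(a,b,i',j',k')_{AB}$ and $(d,c,i,j,k)_{DC}$–$(d,c,i',j',k')_{DC}$ for all index triples; - $(a,b,i,j,k)_{AB}$–$(a,d,i,j,k)_Y$ and $(a,d,i,j,k)_Y$–$(d,c,i,j,k)_{DC}$; - $(a,d,i,j,k)_X$–$(a,d',i,j,k)_Y$ for $d\neq d'$, and $(a,d,i,j,k)_X$–$(a',d,i,j,k)_Y$ for $a\neq a'$; - $(a,d,i,j,k)_X$–$(a,d,i',j',k')_Y$ for all index triples. No other arcs exist. *)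

theory Defs
  imports Main "HOL-Library.Extended_Nat"
begin

text \<open>Vectors in {0,1}^l are represented as functions nat \<Rightarrow> bool, where
  x i is the i-th coordinate (i \<in> {1..l}); coordinates outside {1..l} are False.\<close>

type_synonym bvec = "nat \<Rightarrow> bool"

definition bvecs :: "nat \<Rightarrow> bvec set" where
  "bvecs l = {x. \<forall>i. x i \<longrightarrow> i \<in> {1..l}}"

datatype vert =
    U | V
  | ABC bvec bvec bvec
  | DCB bvec bvec bvec
  | AB bvec bvec nat nat nat
  | DC bvec bvec nat nat nat
  | ADY bvec bvec nat nat nat
  | ADX bvec bvec nat nat nat

definition idx3 :: "nat \<Rightarrow> nat \<Rightarrow> nat \<Rightarrow> nat \<Rightarrow> bool" where
  "idx3 l i j k \<longleftrightarrow> i \<in> {1..l} \<and> j \<in> {1..l} \<and> k \<in> {1..l}"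

text \<open>"b equals 1 on at least two of the positions i,j,k" (positions counted as slots).\<close>
definition two_of :: "bvec \<Rightarrow> nat \<Rightarrow> nat \<Rightarrow> nat \<Rightarrow> bool" where
  "two_of b i j k \<longleftrightarrow> length (filter id [b i, b j, b k]) \<ge> 2"

fun is_vert :: "bvec set \<Rightarrow> nat \<Rightarrow> vert \<Rightarrow> bool" where
  "is_vert S l U = True"
| "is_vert S l V = True"
| "is_vert S l (ABC a b c) = (a \<in> S \<and> b \<in> S \<and> c \<in> S)"
| "is_vert S l (DCB d c b) = (d \<in> S \<and> c \<in> S \<and> b \<in> S)"
| "is_vert S l (AB a b i j k) = (a \<in> S \<and> b \<in> S \<and> idx3 l i j k \<and> a i \<and> a j \<and> a k \<and> two_of b i j k)"
| "is_vert S l (DC d c i j k) = (d \<in> S \<and> c \<in> S \<and> idx3 l i j k \<and> d i \<and> d j \<and> d k \<and> two_of c i j k)"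
| "is_vert S l (ADY a d i j k) = (a \<in> S \<and> d \<in> S \<and> idx3 l i j k \<and> a i \<and> a j \<and> a k \<and> d i \<and> d j \<and> d k)"
| "is_vert S l (ADX a d i j k) = (a \<in> S \<and> d \<in> S \<and> idx3 l i j k \<and>
      length (filter Not [a i, a j, a k, d i, d j, d k]) \<le> 1)"

inductive oarc :: "vert \<Rightarrow> vert \<Rightarrow> nat \<Rightarrow> bool" where
  "oarc U (ABC a b c) 0"
| "oarc (ABC a b c) U 4"
| "oarc V (DCB d c b) 4"
| "oarc (DCB d c b) V 0"
| "oarc U (AB a b i j k) 0"
| "oarc (AB a b i j k) U 3"
| "oarc (DC d c i j k) V 0"
| "oarc V (DC d c i j k) 3"

text \<open>Double-arcs, listed once; they are present in both directions.\<close>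
inductive darc :: "vert \<Rightarrow> vert \<Rightarrow> nat \<Rightarrow> bool" where
  "darc U V 2"
| "darc U (ADX a d i j k) 1"
| "darc V (ADX a d i j k) 1"
| "darc U (ADY a d i j k) 2"
| "darc V (ADY a d i j k) 2"
| "darc (AB a b i j k) V 2"
| "darc (DC d c i j k) U 2"
| "h \<in> {i, j, k} \<Longrightarrow> b h \<Longrightarrow> c h \<Longrightarrow> darc (ABC a b c) (AB a b i j k) 1"
| "h \<in> {i, j, k} \<Longrightarrow> c h \<Longrightarrow> b h \<Longrightarrow> darc (DCB d c b) (DC d c i j k) 1"
| "darc (AB a b i j k) (AB a b i' j' k') 1"
| "darc (DC d c i j k) (DC d c i' j' k') 1"
| "darc (AB a b i j k) (ADY a d i j k) 1"
| "darc (ADY a d i j k) (DC d c i j k) 1"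
| "d \<noteq> d' \<Longrightarrow> darc (ADX a d i j k) (ADY a d' i j k) 1"
| "a \<noteq> a' \<Longrightarrow> darc (ADX a d i j k) (ADY a' d i j k) 1"
| "darc (ADX a d i j k) (ADY a d i' j' k') 1"

definition rho_arc :: "bvec set \<Rightarrow> nat \<Rightarrow> vert \<Rightarrow> vert \<Rightarrow> nat \<Rightarrow> bool" where
  "rho_arc S l x y w \<longleftrightarrow> is_vert S l x \<and> is_vert S l y \<and>
     (oarc x y w \<or> darc x y w \<or> darc y x w)"

inductive walk :: "(vert \<Rightarrow> vert \<Rightarrow> nat \<Rightarrow> bool) \<Rightarrow> vert \<Rightarrow> vert \<Rightarrow> nat \<Rightarrow> bool"
  for E where
  walk_nil: "walk E x x 0"
| walk_cons: "E x z a \<Longrightarrow> walk E z y b \<Longrightarrow> walk E x y (a + b)"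

definition dist :: "(vert \<Rightarrow> vert \<Rightarrow> nat \<Rightarrow> bool) \<Rightarrow> vert \<Rightarrow> vert \<Rightarrow> enat" where
  "dist E x y = (INF w \<in> {w. walk E x y w}. enat w)"

definition diam :: "bvec set \<Rightarrow> nat \<Rightarrow> enat" where
  "diam S l = (SUP p \<in> {(x, y). is_vert S l x \<and> is_vert S l y}. dist (rho_arc S l) (fst p) (snd p))"

end

theory Submission
  imports Defs
begin

text \<open>Every vertex has a walk of weight at most 4 to every other vertex through one of the
  hubs U and V, except for six kinds of pairs (from ABC, AB or AD_Y to AD_Y, DC or DCB). Those
  are joined by four unit arcs along ABC -- AB -- AD_Y -- DC -- DCB, with a detour through AD_X
  when leaving or entering AD_Y. The index triples of the intermediate vertices are chosen
  as coordinates on which suitable quadruples of vectors are all 1, which exist because S has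
  no orthogonal quadruple; the same argument gives the hub walks from ABC and DCB.\<close>

definition no_orthogonal_quadruple :: "bvec set \<Rightarrow> nat \<Rightarrow> bool" where
  "no_orthogonal_quadruple S l \<longleftrightarrow>
     (\<forall>a\<in>S. \<forall>b\<in>S. \<forall>c\<in>S. \<forall>d\<in>S. \<exists>h\<in>{1..l}. a h \<and> b h \<and> c h \<and> d h)"

lemma common_coordinate:
  assumes "no_orthogonal_quadruple S l" "a \<in> S" "b \<in> S" "c \<in> S" "d \<in> S"
  obtains h where "h \<in> {1..l}" "a h" "b h" "c h" "d h"
  using assms unfolding no_orthogonal_quadruple_def by blast

definition reachable_within ::
    "(vert \<Rightarrow> vert \<Rightarrow> nat \<Rightarrow> bool) \<Rightarrow> nat \<Rightarrow> vert \<Rightarrow> vert \<Rightarrow> bool" where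
  "reachable_within E n x y \<longleftrightarrow> (\<exists>w. walk E x y w \<and> w \<le> n)"

lemma walk_append: "walk E x y a \<Longrightarrow> walk E y z b \<Longrightarrow> walk E x z (a + b)"
  by (induction rule: walk.induct) (auto simp: add.assoc intro: walk_cons)

lemma reachable_within_refl: "reachable_within E 0 x x"
  unfolding reachable_within_def using walk_nil by blast

lemma reachable_within_arc: "E x y w \<Longrightarrow> reachable_within E w x y"
  unfolding reachable_within_def using walk_cons[OF _ walk_nil] by fastforce

lemma reachable_within_trans:
  "reachable_within E a x y \<Longrightarrow> reachable_within E b y z \<Longrightarrow> reachable_within E (a + b) x z"
  unfolding reachable_within_def using walk_append add_mono by blast

lemma reachable_within_mono: "reachable_within E m x y \<Longrightarrow> m \<le> n \<Longrightarrow> reachable_within E n x y"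
  unfolding reachable_within_def by (meson order_trans)

lemma reachable_within_two_arcs:
  "E x y a \<Longrightarrow> E y z b \<Longrightarrow> reachable_within E (a + b) x z"
  by (rule reachable_within_trans[OF reachable_within_arc reachable_within_arc])

lemma reachable_within_four_arcs:
  assumes "E x y\<^sub>1 1" "E y\<^sub>1 y\<^sub>2 1" "E y\<^sub>2 y\<^sub>3 1" "E y\<^sub>3 z 1"
  shows "reachable_within E 4 x z"
  using reachable_within_trans[OF reachable_within_two_arcs[of E, OF assms(1,2)]
      reachable_within_two_arcs[of E, OF assms(3,4)]]
  by (simp add: numeral_eq_Suc)

lemma dist_le_if_reachable_within: "reachable_within E n x y \<Longrightarrow> dist E x y \<le> enat n"
  unfolding reachable_within_def dist_def by (auto intro: INF_lower2)

fun to_U_bound :: "vert \<Rightarrow> nat" where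
  "to_U_bound U = 0" | "to_U_bound V = 2" | "to_U_bound (ABC _ _ _) = 4"
| "to_U_bound (DCB _ _ _) = 3" | "to_U_bound (AB _ _ _ _ _) = 3" | "to_U_bound (DC _ _ _ _ _) = 2"
| "to_U_bound (ADY _ _ _ _ _) = 2" | "to_U_bound (ADX _ _ _ _ _) = 1"

fun from_U_bound :: "vert \<Rightarrow> nat" where
  "from_U_bound U = 0" | "from_U_bound V = 2" | "from_U_bound (ABC _ _ _) = 0"
| "from_U_bound (DCB _ _ _) = 3" | "from_U_bound (AB _ _ _ _ _) = 0" | "from_U_bound (DC _ _ _ _ _) = 2"
| "from_U_bound (ADY _ _ _ _ _) = 2" | "from_U_bound (ADX _ _ _ _ _) = 1"

fun to_V_bound :: "vert \<Rightarrow> nat" where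
  "to_V_bound U = 2" | "to_V_bound V = 0" | "to_V_bound (ABC _ _ _) = 3"
| "to_V_bound (DCB _ _ _) = 0" | "to_V_bound (AB _ _ _ _ _) = 2" | "to_V_bound (DC _ _ _ _ _) = 0"
| "to_V_bound (ADY _ _ _ _ _) = 2" | "to_V_bound (ADX _ _ _ _ _) = 1"

fun from_V_bound :: "vert \<Rightarrow> nat" where
  "from_V_bound U = 2" | "from_V_bound V = 0" | "from_V_bound (ABC _ _ _) = 2"
| "from_V_bound (DCB _ _ _) = 4" | "from_V_bound (AB _ _ _ _ _) = 2" | "from_V_bound (DC _ _ _ _ _) = 3"
| "from_V_bound (ADY _ _ _ _ _) = 2" | "from_V_bound (ADX _ _ _ _ _) = 1"

lemma reachable_to_U:
  assumes Q: "no_orthogonal_quadruple S l" and x: "is_vert S l x"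
  shows "reachable_within (rho_arc S l) (to_U_bound x) x U"
proof (cases x)
  case (DCB d c b)
  then obtain h where h: "h \<in> {1..l}" "d h" "c h" "b h"
    using x by (auto intro: common_coordinate[OF Q, of d d c b])
  have "rho_arc S l (DCB d c b) (DC d c h h h) 1" "rho_arc S l (DC d c h h h) U 2"
    using x h DCB by (auto simp: rho_arc_def two_of_def idx3_def intro: darc.intros[simplified])
  then show ?thesis
    using DCB reachable_within_two_arcs by fastforce
qed (use x in \<open>auto simp: rho_arc_def intro!: reachable_within_refl reachable_within_arc
      intro: darc.intros[simplified] oarc.intros\<close>)

lemma reachable_from_U:
  assumes Q: "no_orthogonal_quadruple S l" and x: "is_vert S l x"
  shows "reachable_within (rho_arc S l) (from_U_bound x) U x"
proof (cases x)
  case (DCB d c b)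
  then obtain h where h: "h \<in> {1..l}" "d h" "c h" "b h"
    using x by (auto intro: common_coordinate[OF Q, of d d c b])
  have "rho_arc S l U (DC d c h h h) 2" "rho_arc S l (DC d c h h h) (DCB d c b) 1"
    using x h DCB by (auto simp: rho_arc_def two_of_def idx3_def intro: darc.intros[simplified])
  then show ?thesis
    using DCB reachable_within_two_arcs by fastforce
qed (use x in \<open>auto simp: rho_arc_def intro!: reachable_within_refl reachable_within_arc
      intro: darc.intros[simplified] oarc.intros\<close>)

lemma reachable_to_V:
  assumes Q: "no_orthogonal_quadruple S l" and x: "is_vert S l x"
  shows "reachable_within (rho_arc S l) (to_V_bound x) x V"
proof (cases x)
  case (ABC a b c)
  then obtain h where h: "h \<in> {1..l}" "a h" "b h" "c h"
    using x by (auto intro: common_coordinate[OF Q, of a a b c])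
  have "rho_arc S l (ABC a b c) (AB a b h h h) 1" "rho_arc S l (AB a b h h h) V 2"
    using x h ABC by (auto simp: rho_arc_def two_of_def idx3_def intro: darc.intros[simplified])
  then show ?thesis
    using ABC reachable_within_two_arcs by fastforce
qed (use x in \<open>auto simp: rho_arc_def intro!: reachable_within_refl reachable_within_arc
      intro: darc.intros[simplified] oarc.intros\<close>)

lemma reachable_from_V:
  assumes Q: "no_orthogonal_quadruple S l" and x: "is_vert S l x"
  shows "reachable_within (rho_arc S l) (from_V_bound x) V x"
proof (cases x)
  case (DCB d c b)
  then obtain h where h: "h \<in> {1..l}" "d h" "c h" "b h"
    using x by (auto intro: common_coordinate[OF Q, of d d c b])
  have "rho_arc S l V (DC d c h h h) 3" "rho_arc S l (DC d c h h h) (DCB d c b) 1"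
    using x h DCB by (auto simp: rho_arc_def two_of_def idx3_def
        intro: darc.intros[simplified] oarc.intros)
  then show ?thesis
    using DCB reachable_within_two_arcs by fastforce
next
  case (ABC a b c)
  have "rho_arc S l V U 2" "rho_arc S l U (ABC a b c) 0"
    using x ABC by (auto simp: rho_arc_def intro: darc.intros oarc.intros)
  then show ?thesis
    using ABC reachable_within_two_arcs by fastforce
qed (use x in \<open>auto simp: rho_arc_def intro!: reachable_within_refl reachable_within_arc
      intro: darc.intros[simplified] oarc.intros\<close>)

lemma reachable_ABC_to_DCB:
  assumes Q: "no_orthogonal_quadruple S l"
    and x: "is_vert S l (ABC a b c)" and y: "is_vert S l (DCB d c' b')"
  shows "reachable_within (rho_arc S l) 4 (ABC a b c) (DCB d c' b')"
proof -
  obtain i where i: "i \<in> {1..l}" "a i" "b i" "c i" "d i"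
    using x y by (auto intro: common_coordinate[OF Q, of a b c d])
  obtain j where j: "j \<in> {1..l}" "a j" "d j" "c' j" "b' j"
    using x y by (auto intro: common_coordinate[OF Q, of a d c' b'])
  obtain k where k: "k \<in> {1..l}" "a k" "d k" "b k" "c' k"
    using x y by (auto intro: common_coordinate[OF Q, of a d b c'])
  have "rho_arc S l (ABC a b c) (AB a b i j k) 1"
    "rho_arc S l (AB a b i j k) (ADY a d i j k) 1"
    "rho_arc S l (ADY a d i j k) (DC d c' i j k) 1"
    "rho_arc S l (DC d c' i j k) (DCB d c' b') 1"
    using x y i j k by (auto simp: rho_arc_def two_of_def idx3_def intro: darc.intros[simplified])
  then show ?thesis by (rule reachable_within_four_arcs)
qed

lemma reachable_ABC_to_DC:
  assumes Q: "no_orthogonal_quadruple S l"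
    and x: "is_vert S l (ABC a b c)" and y: "is_vert S l (DC d c' p q r)"
  shows "reachable_within (rho_arc S l) 4 (ABC a b c) (DC d c' p q r)"
proof -
  obtain i where i: "i \<in> {1..l}" "a i" "b i" "c i" "d i"
    using x y by (auto intro: common_coordinate[OF Q, of a b c d])
  obtain j where j: "j \<in> {1..l}" "a j" "d j" "b j" "c' j"
    using x y by (auto intro: common_coordinate[OF Q, of a d b c'])
  obtain k where k: "k \<in> {1..l}" "a k" "d k" "c' k"
    using x y by (auto intro: common_coordinate[OF Q, of a d c' c'])
  have "rho_arc S l (ABC a b c) (AB a b i j k) 1"
    "rho_arc S l (AB a b i j k) (ADY a d i j k) 1"
    "rho_arc S l (ADY a d i j k) (DC d c' i j k) 1"
    "rho_arc S l (DC d c' i j k) (DC d c' p q r) 1"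
    using x y i j k by (auto simp: rho_arc_def two_of_def idx3_def intro: darc.intros[simplified])
  then show ?thesis by (rule reachable_within_four_arcs)
qed

lemma reachable_ABC_to_ADY:
  assumes Q: "no_orthogonal_quadruple S l"
    and x: "is_vert S l (ABC a b c)" and y: "is_vert S l (ADY a' d p q r)"
  shows "reachable_within (rho_arc S l) 4 (ABC a b c) (ADY a' d p q r)"
proof -
  obtain i where i: "i \<in> {1..l}" "a i" "b i" "c i" "d i"
    using x y by (auto intro: common_coordinate[OF Q, of a b c d])
  obtain j where j: "j \<in> {1..l}" "a j" "d j" "a' j" "b j"
    using x y by (auto intro: common_coordinate[OF Q, of a d a' b])
  have "rho_arc S l (ABC a b c) (AB a b i j j) 1"
    "rho_arc S l (AB a b i j j) (ADY a d i j j) 1"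
    "rho_arc S l (ADX a' d i j j) (ADY a' d p q r) 1"
    using x y i j by (auto simp: rho_arc_def two_of_def idx3_def intro: darc.intros[simplified])
  moreover have "rho_arc S l (ADY a d i j j) (ADX a' d i j j) 1"
    using x y i j
    by (cases "a' = a") (auto simp: rho_arc_def two_of_def idx3_def intro: darc.intros[simplified])
  ultimately show ?thesis by (intro reachable_within_four_arcs)
qed

lemma reachable_AB_to_DCB:
  assumes Q: "no_orthogonal_quadruple S l"
    and x: "is_vert S l (AB a b p q r)" and y: "is_vert S l (DCB d c b')"
  shows "reachable_within (rho_arc S l) 4 (AB a b p q r) (DCB d c b')"
proof -
  obtain i where i: "i \<in> {1..l}" "a i" "d i" "c i" "b' i"
    using x y by (auto intro: common_coordinate[OF Q, of a d c b'])
  obtain j where j: "j \<in> {1..l}" "a j" "d j" "b j" "c j"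
    using x y by (auto intro: common_coordinate[OF Q, of a d b c])
  have "rho_arc S l (AB a b p q r) (AB a b i j j) 1"
    "rho_arc S l (AB a b i j j) (ADY a d i j j) 1"
    "rho_arc S l (ADY a d i j j) (DC d c i j j) 1"
    "rho_arc S l (DC d c i j j) (DCB d c b') 1"
    using x y i j by (auto simp: rho_arc_def two_of_def idx3_def intro: darc.intros[simplified])
  then show ?thesis by (rule reachable_within_four_arcs)
qed

lemma reachable_AB_to_DC:
  assumes Q: "no_orthogonal_quadruple S l"
    and x: "is_vert S l (AB a b p q r)" and y: "is_vert S l (DC d c p' q' r')"
  shows "reachable_within (rho_arc S l) 4 (AB a b p q r) (DC d c p' q' r')"
proof -
  obtain i where i: "i \<in> {1..l}" "a i" "d i" "b i" "c i"
    using x y by (auto intro: common_coordinate[OF Q, of a d b c])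
  have "rho_arc S l (AB a b p q r) (AB a b i i i) 1"
    "rho_arc S l (AB a b i i i) (ADY a d i i i) 1"
    "rho_arc S l (ADY a d i i i) (DC d c i i i) 1"
    "rho_arc S l (DC d c i i i) (DC d c p' q' r') 1"
    using x y i by (auto simp: rho_arc_def two_of_def idx3_def intro: darc.intros[simplified])
  then show ?thesis by (rule reachable_within_four_arcs)
qed

lemma reachable_ADY_to_DCB:
  assumes Q: "no_orthogonal_quadruple S l"
    and x: "is_vert S l (ADY a d p q r)" and y: "is_vert S l (DCB d' c b)"
  shows "reachable_within (rho_arc S l) 4 (ADY a d p q r) (DCB d' c b)"
proof -
  obtain i where i: "i \<in> {1..l}" "a i" "d' i" "c i" "b i"
    using x y by (auto intro: common_coordinate[OF Q, of a d' c b])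
  obtain j where j: "j \<in> {1..l}" "a j" "d' j" "c j" "d j"
    using x y by (auto intro: common_coordinate[OF Q, of a d' c d])
  have "rho_arc S l (ADY a d p q r) (ADX a d i j j) 1"
    "rho_arc S l (ADY a d' i j j) (DC d' c i j j) 1"
    "rho_arc S l (DC d' c i j j) (DCB d' c b) 1"
    using x y i j by (auto simp: rho_arc_def two_of_def idx3_def intro: darc.intros[simplified])
  moreover have "rho_arc S l (ADX a d i j j) (ADY a d' i j j) 1"
    using x y i j
    by (cases "d' = d") (auto simp: rho_arc_def two_of_def idx3_def intro: darc.intros[simplified])
  ultimately show ?thesis by (intro reachable_within_four_arcs)
qed

lemma reachable_via_U:
  assumes "no_orthogonal_quadruple S l" "is_vert S l x" "is_vert S l y"
    and "to_U_bound x + from_U_bound y \<le> n"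
  shows "reachable_within (rho_arc S l) n x y"
  using reachable_within_mono[OF reachable_within_trans[OF reachable_to_U reachable_from_U]] assms
  by blast

lemma reachable_via_V:
  assumes "no_orthogonal_quadruple S l" "is_vert S l x" "is_vert S l y"
    and "to_V_bound x + from_V_bound y \<le> n"
  shows "reachable_within (rho_arc S l) n x y"
  using reachable_within_mono[OF reachable_within_trans[OF reachable_to_V reachable_from_V]] assms
  by blast

lemma reachable_within_4:
  assumes Q: "no_orthogonal_quadruple S l" and "is_vert S l x" "is_vert S l y"
  shows "reachable_within (rho_arc S l) 4 x y"
  using assms(2,3)
  by (cases x; cases y)
    (auto simp del: is_vert.simps intro: reachable_via_U[OF Q] reachable_via_V[OF Q]
      reachable_ABC_to_DCB[OF Q] reachable_ABC_to_DC[OF Q] reachable_ABC_to_ADY[OF Q]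
      reachable_AB_to_DCB[OF Q] reachable_AB_to_DC[OF Q] reachable_ADY_to_DCB[OF Q])

theorem mainTheorem2:
  fixes S :: "bvec set" and l :: nat
  assumes "S \<subseteq> bvecs l"
    and "finite S"
    and "\<forall>a\<in>S. \<forall>b\<in>S. \<forall>c\<in>S. \<forall>d\<in>S. \<exists>h\<in>{1..l}. a h \<and> b h \<and> c h \<and> d h"
  shows "diam S l \<le> 4"
proof -
  have Q: "no_orthogonal_quadruple S l"
    using assms(3) unfolding no_orthogonal_quadruple_def .
  have "dist (rho_arc S l) x y \<le> 4" if "is_vert S l x" "is_vert S l y" for x y
    using dist_le_if_reachable_within[OF reachable_within_4[OF Q that]] by (simp add: numeral_eq_enat)
  then show ?thesis
    unfolding diam_def by (auto intro: SUP_least)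
qed

end
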